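(* Let $G$ be a group. For every positive integer $n$, $\bar\lambda_n(G) = N_{n,1}(G)$.
   Context: $\gamma_1(G) = G$, $\gamma_{j+1}(G) = [\gamma_j(G), G]$. For a subgroup $H$ and integer $m$, $H^m$ is the subgroup generated by all $m$-th powers. The $\bar\lambda$-series is $\bar\lambda_1(G) = G$, $\bar\lambda_{n+1}(G) = \bar\lambda_n(G)^4[\bar\lambda_n(G), G]$. For $1 \le k \le n$, $N_{n,k}(G) = \gamma_k(G)^{4^{n-k}}\gamma_{k+1}(G)^{4^{n-k-1}} \cdots \gamma_n(G)$; in particular $N_{n,1}(G) = G^{4^{n-1}}\gamma_2(G)^{4^{n-2}}\cdots\gamma_n(G)$. *)

theory Defs
  imports "HOL-Algebra.Algebra"
begin

definition comm_sgp :: "('a, 'b) monoid_scheme \<Rightarrow> 'a set \<Rightarrow> 'a set \<Rightarrow> 'a set" where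
  "comm_sgp G H K = generate G
     {inv\<^bsub>G\<^esub> h \<otimes>\<^bsub>G\<^esub> inv\<^bsub>G\<^esub> k \<otimes>\<^bsub>G\<^esub> h \<otimes>\<^bsub>G\<^esub> k | h k. h \<in> H \<and> k \<in> K}"

definition pow_sgp :: "('a, 'b) monoid_scheme \<Rightarrow> 'a set \<Rightarrow> nat \<Rightarrow> 'a set" where
  "pow_sgp G H m = generate G {h [^]\<^bsub>G\<^esub> m | h. h \<in> H}"

text \<open>Product HK of subgroups (the subgroup generated by H and K; equal to the
  set product when the factors are normal).\<close>
definition prod_sgp :: "('a, 'b) monoid_scheme \<Rightarrow> 'a set \<Rightarrow> 'a set \<Rightarrow> 'a set" where
  "prod_sgp G H K = generate G (H \<union> K)"

text \<open>Lower central series, shifted: lcs G j = gamma_(j+1)(G).\<close>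
primrec lcs :: "('a, 'b) monoid_scheme \<Rightarrow> nat \<Rightarrow> 'a set" where
  "lcs G 0 = carrier G"
| "lcs G (Suc j) = comm_sgp G (lcs G j) (carrier G)"

definition gamma :: "('a, 'b) monoid_scheme \<Rightarrow> nat \<Rightarrow> 'a set" where
  "gamma G j = lcs G (j - 1)"

text \<open>lambda-bar series, shifted: lbs G j = lambda-bar_(j+1)(G).\<close>
primrec lbs :: "('a, 'b) monoid_scheme \<Rightarrow> nat \<Rightarrow> 'a set" where
  "lbs G 0 = carrier G"
| "lbs G (Suc j) = prod_sgp G (pow_sgp G (lbs G j) 4) (comm_sgp G (lbs G j) (carrier G))"

definition lambda_bar :: "('a, 'b) monoid_scheme \<Rightarrow> nat \<Rightarrow> 'a set" where
  "lambda_bar G n = lbs G (n - 1)"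

text \<open>N_{n,k}(G) = gamma_k^{4^(n-k)} gamma_(k+1)^{4^(n-k-1)} ... gamma_n.\<close>
definition N_sgp :: "('a, 'b) monoid_scheme \<Rightarrow> nat \<Rightarrow> nat \<Rightarrow> 'a set" where
  "N_sgp G n k = generate G (\<Union>i\<in>{k..n}. pow_sgp G (gamma G i) (4 ^ (n - i)))"

end

theory Submission
  imports Defs
begin

text \<open>Give \<gamma>_k(G) the weight 2k and let V(a) be the subgroup generated by the powers
  x^(2^(a-2k)) with x \<in> \<gamma>_k(G). Then N_{n,1}(G) = V(2n), and lambda-bar_n(G) = V(2n) follows by
  induction on n from [V(a), G] \<subseteq> V(a+2) and V(a)^2 \<subseteq> V(a+1). These two inclusions are
  proved together modulo V(t), by descending induction on the smallest k whose generators
  are kept. Squares of products are handled by (yz)^2 = y^2 z^2 [z,y]^z. For a generator,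
  [x^(2^s), g] = x^(-2^s) (x[x,g])^(2^s), and the right-hand side is reduced by repeated
  squaring to commutators with [x,g] \<in> \<gamma>_(k+1)(G), which is where the induction hypothesis
  enters.\<close>

context group begin

subsection \<open>Commutator identities\<close>

definition commutator :: "'a \<Rightarrow> 'a \<Rightarrow> 'a" where
  "commutator x y = inv x \<otimes> inv y \<otimes> x \<otimes> y"

lemma commutator_closed [simp]:
  "x \<in> carrier G \<Longrightarrow> y \<in> carrier G \<Longrightarrow> commutator x y \<in> carrier G"
  unfolding commutator_def by simp

lemma mult_inv_mult_cancel [simp]:
  "g \<in> carrier G \<Longrightarrow> x \<in> carrier G \<Longrightarrow> g \<otimes> (inv g \<otimes> x) = x"
  "g \<in> carrier G \<Longrightarrow> x \<in> carrier G \<Longrightarrow> inv g \<otimes> (g \<otimes> x) = x"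
  by (simp_all add: m_assoc[symmetric])

lemma nat_pow_two: "x \<in> carrier G \<Longrightarrow> x [^] (2::nat) = x \<otimes> x"
  by (simp add: numeral_2_eq_2)

lemma nat_pow_two_pow_Suc:
  "x \<in> carrier G \<Longrightarrow> x [^] ((2::nat) ^ Suc s) = x [^] ((2::nat) ^ s) \<otimes> x [^] ((2::nat) ^ s)"
  by (simp add: mult_2 nat_pow_mult)

lemma nat_pow_two_pow_le:
  "p \<le> q \<Longrightarrow> x \<in> carrier G \<Longrightarrow> x [^] ((2::nat) ^ q) = (x [^] ((2::nat) ^ p)) [^] ((2::nat) ^ (q - p))"
  by (simp add: nat_pow_pow power_add[symmetric])

lemma inv_conj_nat_pow:
  assumes "x \<in> carrier G" "g \<in> carrier G"
  shows "inv g \<otimes> x [^] (n::nat) \<otimes> g = (inv g \<otimes> x \<otimes> g) [^] n"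
proof (induction n)
  case (Suc n)
  have "inv g \<otimes> x [^] Suc n \<otimes> g = (inv g \<otimes> x [^] n \<otimes> g) \<otimes> (inv g \<otimes> x \<otimes> g)"
    using assms by (simp add: m_assoc)
  with Suc show ?case by simp
qed (use assms in \<open>simp add: l_inv\<close>)

lemma inv_conj_eq_mult_commutator:
  "x \<in> carrier G \<Longrightarrow> g \<in> carrier G \<Longrightarrow> inv g \<otimes> x \<otimes> g = x \<otimes> commutator x g"
  unfolding commutator_def by (simp add: m_assoc)

lemma commutator_eq_inv_mult_conj:
  "x \<in> carrier G \<Longrightarrow> g \<in> carrier G \<Longrightarrow> commutator x g = inv x \<otimes> (inv g \<otimes> x \<otimes> g)"
  unfolding commutator_def by (simp add: m_assoc)

lemma commutator_one_left: "g \<in> carrier G \<Longrightarrow> commutator \<one> g = \<one>"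
  unfolding commutator_def by (simp add: m_assoc)

lemma commutator_mult_left:
  "y \<in> carrier G \<Longrightarrow> z \<in> carrier G \<Longrightarrow> g \<in> carrier G \<Longrightarrow>
   commutator (y \<otimes> z) g = inv z \<otimes> commutator y g \<otimes> z \<otimes> commutator z g"
  unfolding commutator_def by (simp add: m_assoc inv_mult_group)

lemma commutator_inv_left:
  "y \<in> carrier G \<Longrightarrow> g \<in> carrier G \<Longrightarrow> commutator (inv y) g = y \<otimes> inv (commutator y g) \<otimes> inv y"
  unfolding commutator_def by (simp add: m_assoc inv_mult_group)

lemma square_mult:
  "y \<in> carrier G \<Longrightarrow> z \<in> carrier G \<Longrightarrow>
   (y \<otimes> z) [^] (2::nat) = y [^] (2::nat) \<otimes> z [^] (2::nat) \<otimes> (inv z \<otimes> commutator z y \<otimes> z)"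
  unfolding commutator_def by (simp add: nat_pow_two m_assoc)

lemma inv_square_mult_square:
  "u \<in> carrier G \<Longrightarrow> d \<in> carrier G \<Longrightarrow>
   inv (u \<otimes> u) \<otimes> ((u \<otimes> d) \<otimes> (u \<otimes> d)) = d [^] (2::nat) \<otimes> (inv d \<otimes> commutator d u \<otimes> d)"
  unfolding commutator_def by (simp add: nat_pow_two m_assoc inv_mult_group)

lemma subgroup_nat_pow_closed: "subgroup H G \<Longrightarrow> h \<in> H \<Longrightarrow> h [^] (n::nat) \<in> H"
  by (induction n) (auto simp: subgroup.one_closed subgroup.m_closed)

lemma normal_commutator_closed:
  assumes "N \<lhd> G" "y \<in> N" "g \<in> carrier G"
  shows "commutator y g \<in> N"
proof -
  interpret normal N G by fact
  have "y \<in> carrier G" using assms(2) subset by auto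
  then show ?thesis
    using assms(2,3) inv_op_closed1 commutator_eq_inv_mult_conj by simp
qed

lemma commutator_generate_closed:
  assumes N: "N \<lhd> G" and S: "S \<subseteq> carrier G"
    and gens: "\<And>h g. h \<in> S \<Longrightarrow> g \<in> carrier G \<Longrightarrow> commutator h g \<in> N"
    and y: "y \<in> generate G S" and g: "g \<in> carrier G"
  shows "commutator y g \<in> N"
  using y
proof (induction rule: generate.induct)
  case one
  then show ?case using g commutator_one_left normal_imp_subgroup[OF N] subgroup.one_closed by metis
next
  case (incl h)
  then show ?case using gens g by simp
next
  case (inv h)
  interpret normal N G by fact
  have "h \<in> carrier G" using inv S by auto
  moreover have "inv (commutator h g) \<in> N" using gens inv g by simp
  ultimately show ?case using inv_op_closed2 g commutator_inv_left by simp
next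
  case (eng h1 h2)
  interpret normal N G by fact
  have "h1 \<in> carrier G" "h2 \<in> carrier G" using eng.hyps generate_in_carrier[OF S] by auto
  with eng g show ?case using inv_op_closed1 commutator_mult_left by simp
qed

lemma square_generate_closed:
  assumes N: "N \<lhd> G" and S: "S \<subseteq> carrier G"
    and gens: "\<And>h. h \<in> S \<Longrightarrow> h [^] (2::nat) \<in> N"
    and comm: "\<And>y g. y \<in> generate G S \<Longrightarrow> g \<in> carrier G \<Longrightarrow> commutator y g \<in> N"
    and y: "y \<in> generate G S"
  shows "y [^] (2::nat) \<in> N"
  using y
proof (induction rule: generate.induct)
  case one
  then show ?case using normal_imp_subgroup[OF N] subgroup.one_closed by simp
next
  case (incl h)
  then show ?case using gens by simp
next
  case (inv h)
  interpret normal N G by fact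
  have "h \<in> carrier G" using inv S by auto
  then show ?case using inv gens nat_pow_inv by (metis m_inv_closed)
next
  case (eng h1 h2)
  interpret normal N G by fact
  have "h1 \<in> carrier G" "h2 \<in> carrier G" using eng.hyps generate_in_carrier[OF S] by auto
  moreover have "commutator h2 h1 \<in> N" using comm eng.hyps(2) \<open>h1 \<in> carrier G\<close> .
  ultimately show ?case using eng inv_op_closed1 square_mult by simp
qed

subsection \<open>The lower central series\<close>

lemma lcs_normal: "lcs G j \<lhd> G"
proof (induction j)
  case 0
  then show ?case by (simp add: normal_invI subgroup_self)
next
  case (Suc j)
  interpret normal "lcs G j" G by fact
  let ?S = "{inv h \<otimes> inv k \<otimes> h \<otimes> k | h k. h \<in> lcs G j \<and> k \<in> carrier G}"
  show ?case unfolding lcs.simps comm_sgp_def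
  proof (rule normal_generateI)
    show "?S \<subseteq> carrier G" by auto
  next
    fix s g assume "s \<in> ?S" and g: "g \<in> carrier G"
    then obtain h k where s: "s = inv h \<otimes> inv k \<otimes> h \<otimes> k" and hk: "h \<in> lcs G j" "k \<in> carrier G"
      by auto
    have "g \<otimes> s \<otimes> inv g
        = inv (g \<otimes> h \<otimes> inv g) \<otimes> inv (g \<otimes> k \<otimes> inv g) \<otimes> (g \<otimes> h \<otimes> inv g) \<otimes> (g \<otimes> k \<otimes> inv g)"
      using hk g s by (simp add: m_assoc inv_mult_group)
    moreover have "g \<otimes> h \<otimes> inv g \<in> lcs G j" using inv_op_closed2 g hk by auto
    ultimately show "g \<otimes> s \<otimes> inv g \<in> ?S" using g hk by blast
  qed
qed

lemma lcs_subgroup: "subgroup (lcs G j) G"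
  by (rule normal_imp_subgroup[OF lcs_normal])

lemma lcs_carrier: "x \<in> lcs G j \<Longrightarrow> x \<in> carrier G"
  using subgroup.mem_carrier[OF lcs_subgroup] .

lemma commutator_in_lcs_Suc:
  "x \<in> lcs G j \<Longrightarrow> g \<in> carrier G \<Longrightarrow> commutator x g \<in> lcs G (Suc j)"
  unfolding lcs.simps comm_sgp_def commutator_def by (rule generate.incl) blast

lemma lcs_Suc_subset: "lcs G (Suc j) \<subseteq> lcs G j"
  unfolding lcs.simps comm_sgp_def
proof (rule generate_subgroup_incl[OF _ lcs_subgroup], clarify)
  fix h k assume h: "h \<in> lcs G j" and k: "k \<in> carrier G"
  have "inv h \<otimes> inv k \<otimes> h \<otimes> k = inv h \<otimes> (inv k \<otimes> h \<otimes> k)"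
    using lcs_carrier[OF h] k by (simp add: m_assoc)
  then show "inv h \<otimes> inv k \<otimes> h \<otimes> k \<in> lcs G j"
    using h k normal.inv_op_closed1[OF lcs_normal] subgroup.m_closed[OF lcs_subgroup]
      subgroup.m_inv_closed[OF lcs_subgroup] by simp
qed

lemma lcs_antimono: "j \<le> j' \<Longrightarrow> lcs G j' \<subseteq> lcs G j"
  by (induction j' rule: dec_induct) (use lcs_Suc_subset in blast)+

subsection \<open>Subgroups generated by weighted powers\<close>

text \<open>lcs G j = \<gamma>_(j+1)(G) has weight 2(j+1) and weight_sgp a is V(a); by truncated
  subtraction the exponent is 1 once the weight reaches a. Adding V(t) in tail_sgp makes all
  terms of weight \<ge> t trivial, which is what starts the descending induction on m.\<close>

definition lcs_powers :: "nat \<Rightarrow> nat \<Rightarrow> 'a set" where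
  "lcs_powers a m = {x [^] ((2::nat) ^ (a - 2 * (j + 1))) | x j. m \<le> j \<and> x \<in> lcs G j}"

definition weight_sgp :: "nat \<Rightarrow> 'a set" where
  "weight_sgp a = generate G (lcs_powers a 0)"

definition tail_sgp :: "nat \<Rightarrow> nat \<Rightarrow> nat \<Rightarrow> 'a set" where
  "tail_sgp t a m = generate G (lcs_powers a m \<union> weight_sgp t)"

lemma lcs_powersI: "x \<in> lcs G j \<Longrightarrow> m \<le> j \<Longrightarrow> x [^] ((2::nat) ^ (a - 2 * (j + 1))) \<in> lcs_powers a m"
  unfolding lcs_powers_def by blast

lemma lcs_powersE:
  assumes "p \<in> lcs_powers a m"
  obtains x j where "p = x [^] ((2::nat) ^ (a - 2 * (j + 1)))" "m \<le> j" "x \<in> lcs G j"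
  using assms unfolding lcs_powers_def by blast

lemma lcs_powers_carrier: "lcs_powers a m \<subseteq> carrier G"
  using lcs_carrier by (auto elim: lcs_powersE)

lemma lcs_powers_conj:
  assumes "p \<in> lcs_powers a m" "g \<in> carrier G"
  shows "g \<otimes> p \<otimes> inv g \<in> lcs_powers a m"
proof -
  obtain x j where p: "p = x [^] ((2::nat) ^ (a - 2 * (j + 1)))" "m \<le> j" "x \<in> lcs G j"
    using assms(1) by (rule lcs_powersE)
  have "g \<otimes> p \<otimes> inv g = (g \<otimes> x \<otimes> inv g) [^] ((2::nat) ^ (a - 2 * (j + 1)))"
    using inv_conj_nat_pow[of x "inv g"] lcs_carrier[OF p(3)] assms(2) p(1) by simp
  moreover have "g \<otimes> x \<otimes> inv g \<in> lcs G j"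
    using normal.inv_op_closed2[OF lcs_normal] p(3) assms(2) by simp
  ultimately show ?thesis using p(2) lcs_powersI by simp
qed

lemma lcs_powers_in_subgroup:
  assumes H: "subgroup H G" and "lcs_powers a m \<subseteq> H" "a \<le> a'" "m \<le> m'"
  shows "lcs_powers a' m' \<subseteq> H"
proof
  fix p assume "p \<in> lcs_powers a' m'"
  then obtain x j where p: "p = x [^] ((2::nat) ^ (a' - 2 * (j + 1)))" "m' \<le> j" "x \<in> lcs G j"
    by (rule lcs_powersE)
  have "x [^] ((2::nat) ^ (a - 2 * (j + 1))) \<in> H"
    using assms lcs_powersI[OF p(3), of m a] p(2) by auto
  moreover have "p = (x [^] ((2::nat) ^ (a - 2 * (j + 1)))) [^] ((2::nat) ^ ((a' - 2 * (j + 1)) - (a - 2 * (j + 1))))"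
    using nat_pow_two_pow_le[of "a - 2 * (j + 1)" "a' - 2 * (j + 1)"] lcs_carrier[OF p(3)] assms(3) p(1)
    by simp
  ultimately show "p \<in> H" using subgroup_nat_pow_closed[OF H] by simp
qed

lemma weight_sgp_normal: "weight_sgp a \<lhd> G"
  unfolding weight_sgp_def by (rule normal_generateI[OF lcs_powers_carrier lcs_powers_conj])

lemma weight_sgp_subgroup: "subgroup (weight_sgp a) G"
  by (rule normal_imp_subgroup[OF weight_sgp_normal])

lemma lcs_powers_weight_sgp: "lcs_powers a 0 \<subseteq> weight_sgp a"
  unfolding weight_sgp_def by (auto intro: generate.incl)

lemma weight_sgp_antimono: "a \<le> a' \<Longrightarrow> weight_sgp a' \<subseteq> weight_sgp a"
  unfolding weight_sgp_def[of a']
  by (intro generate_subgroup_incl[OF _ weight_sgp_subgroup] lcs_powers_in_subgroup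
      [OF weight_sgp_subgroup lcs_powers_weight_sgp]) auto

lemma weight_sgp_minimal:
  assumes "subgroup H G" and "\<And>x j. x \<in> lcs G j \<Longrightarrow> x [^] ((2::nat) ^ (a - 2 * (j + 1))) \<in> H"
  shows "weight_sgp a \<subseteq> H"
  unfolding weight_sgp_def
  by (rule generate_subgroup_incl[OF _ assms(1)]) (use assms(2) in \<open>auto elim: lcs_powersE\<close>)

lemma lcs_power_in_weight_sgp: "x \<in> lcs G j \<Longrightarrow> x [^] ((2::nat) ^ (a - 2 * (j + 1))) \<in> weight_sgp a"
  using lcs_powers_weight_sgp lcs_powersI by blast

lemma tail_sgp_normal: "tail_sgp t a m \<lhd> G"
  unfolding tail_sgp_def
proof (rule normal_generateI)
  show "lcs_powers a m \<union> weight_sgp t \<subseteq> carrier G"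
    using lcs_powers_carrier subgroup.subset[OF weight_sgp_subgroup] by blast
  show "g \<otimes> h \<otimes> inv g \<in> lcs_powers a m \<union> weight_sgp t"
    if "h \<in> lcs_powers a m \<union> weight_sgp t" "g \<in> carrier G" for h g
    using that lcs_powers_conj normal.inv_op_closed2[OF weight_sgp_normal] by auto
qed

lemma tail_sgp_subgroup: "subgroup (tail_sgp t a m) G"
  by (rule normal_imp_subgroup[OF tail_sgp_normal])

lemma weight_sgp_tail_sgp: "weight_sgp t \<subseteq> tail_sgp t a m"
  unfolding tail_sgp_def by (auto intro: generate.incl)

lemma lcs_powers_tail_sgp: "lcs_powers a m \<subseteq> tail_sgp t a m"
  unfolding tail_sgp_def by (auto intro: generate.incl)

lemma tail_sgp_antimono: "a \<le> a' \<Longrightarrow> m \<le> m' \<Longrightarrow> tail_sgp t a' m' \<subseteq> tail_sgp t a m"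
  unfolding tail_sgp_def[of t a' m']
  using lcs_powers_in_subgroup[OF tail_sgp_subgroup lcs_powers_tail_sgp] weight_sgp_tail_sgp
  by (intro generate_subgroup_incl[OF _ tail_sgp_subgroup]) auto

lemma tail_sgp_eq_weight_sgp: "a \<le> t \<Longrightarrow> tail_sgp t a 0 = weight_sgp a"
proof
  assume "a \<le> t"
  then show "tail_sgp t a 0 \<subseteq> weight_sgp a"
    unfolding tail_sgp_def using lcs_powers_weight_sgp weight_sgp_antimono[of a t]
    by (intro generate_subgroup_incl[OF _ weight_sgp_subgroup]) auto
  show "weight_sgp a \<subseteq> tail_sgp t a 0"
    unfolding weight_sgp_def tail_sgp_def by (rule mono_generate) simp
qed

lemma tail_sgp_subset_weight_sgp: "t \<le> 2 * (m + 1) \<Longrightarrow> tail_sgp t a m \<subseteq> weight_sgp t"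
  unfolding tail_sgp_def
proof (rule generate_subgroup_incl[OF _ weight_sgp_subgroup])
  assume t: "t \<le> 2 * (m + 1)"
  have "lcs_powers a m \<subseteq> weight_sgp t"
  proof
    fix p assume "p \<in> lcs_powers a m"
    then obtain x j where p: "p = x [^] ((2::nat) ^ (a - 2 * (j + 1)))" "m \<le> j" "x \<in> lcs G j"
      by (rule lcs_powersE)
    have "x \<in> weight_sgp t"
      using lcs_power_in_weight_sgp[OF p(3), of t] t p(2) lcs_carrier[OF p(3)] by simp
    then show "p \<in> weight_sgp t" using p(1) subgroup_nat_pow_closed[OF weight_sgp_subgroup] by simp
  qed
  then show "lcs_powers a m \<union> weight_sgp t \<subseteq> weight_sgp t" by simp
qed

subsection \<open>Commutators and squares of weighted powers\<close>

lemma tail_gens_carrier: "lcs_powers a m \<union> weight_sgp t \<subseteq> carrier G"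
  using lcs_powers_carrier subgroup.subset[OF weight_sgp_subgroup] by blast

lemma square_lcs_powers_in_subgroup:
  assumes H: "subgroup H G" and "lcs_powers (Suc a) m \<subseteq> H" and "p \<in> lcs_powers a m"
  shows "p [^] (2::nat) \<in> H"
proof -
  obtain x j where p: "p = x [^] ((2::nat) ^ (a - 2 * (j + 1)))" "m \<le> j" "x \<in> lcs G j"
    using assms(3) by (rule lcs_powersE)
  have "x [^] ((2::nat) ^ (Suc a - 2 * (j + 1))) \<in> H"
    using assms(2) lcs_powersI[OF p(3) p(2)] by blast
  moreover have "p [^] (2::nat) = (x [^] ((2::nat) ^ (Suc a - 2 * (j + 1)))) [^]
      ((2::nat) ^ (Suc (a - 2 * (j + 1)) - (Suc a - 2 * (j + 1))))"
    using p(1) lcs_carrier[OF p(3)] nat_pow_two_pow_le[of "Suc a - 2 * (j + 1)" "Suc (a - 2 * (j + 1))"]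
    by (simp add: nat_pow_pow mult.commute)
  ultimately show ?thesis using subgroup_nat_pow_closed[OF H] by simp
qed

definition tail_closed :: "nat \<Rightarrow> nat \<Rightarrow> bool" where
  "tail_closed t m \<longleftrightarrow>
     (\<forall>a. \<forall>y\<in>tail_sgp t a m. \<forall>g\<in>carrier G. commutator y g \<in> tail_sgp t (a + 2) (Suc m)) \<and>
     (\<forall>a. \<forall>y\<in>tail_sgp t a m. y [^] (2::nat) \<in> tail_sgp t (Suc a) m)"

lemma tail_closed_commutator:
  "tail_closed t m \<Longrightarrow> y \<in> tail_sgp t a m \<Longrightarrow> g \<in> carrier G \<Longrightarrow>
   commutator y g \<in> tail_sgp t (a + 2) (Suc m)"
  unfolding tail_closed_def by blast

lemma tail_closed_square:
  "tail_closed t m \<Longrightarrow> y \<in> tail_sgp t a m \<Longrightarrow> y [^] (2::nat) \<in> tail_sgp t (Suc a) m"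
  unfolding tail_closed_def by blast

lemma tail_closed_base: "t \<le> 2 * (m + 1) \<Longrightarrow> tail_closed t m"
  unfolding tail_closed_def
proof (intro conjI allI ballI)
  fix a y assume "t \<le> 2 * (m + 1)" "y \<in> tail_sgp t a m"
  then have y: "y \<in> weight_sgp t" using tail_sgp_subset_weight_sgp by blast
  show "commutator y g \<in> tail_sgp t (a + 2) (Suc m)" if "g \<in> carrier G" for g
    using normal_commutator_closed[OF weight_sgp_normal y that] weight_sgp_tail_sgp by blast
  show "y [^] (2::nat) \<in> tail_sgp t (Suc a) m"
    using subgroup_nat_pow_closed[OF weight_sgp_subgroup y] weight_sgp_tail_sgp by blast
qed

lemma inv_power_mult_power_in_tail_sgp:
  assumes closed: "tail_closed t (Suc j)" and x: "x \<in> lcs G j" and g: "g \<in> carrier G"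
  shows "inv (x [^] ((2::nat) ^ s)) \<otimes> (x \<otimes> commutator x g) [^] ((2::nat) ^ s)
    \<in> tail_sgp t (2 * j + 4 + s) (Suc j)"
proof (induction s)
  case 0
  have "commutator x g \<in> lcs_powers (2 * j + 4) (Suc j)"
    using lcs_powersI[OF commutator_in_lcs_Suc[OF x g] order.refl, of "2 * j + 4"]
      lcs_carrier[OF x] g by simp
  then show ?case
    using lcs_powers_tail_sgp lcs_carrier[OF x] g by (auto simp: m_assoc[symmetric])
next
  case (Suc s)
  have xc: "x \<in> carrier G" by (rule lcs_carrier[OF x])
  text \<open>With u = x^(2^s) and (x[x,g])^(2^s) = u d, the next quotient is d^2 [d,u]^d.\<close>
  define u where "u = x [^] ((2::nat) ^ s)"
  define d where "d = inv u \<otimes> (x \<otimes> commutator x g) [^] ((2::nat) ^ s)"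
  have u: "u \<in> carrier G" and dc: "d \<in> carrier G"
    unfolding u_def d_def using xc g by simp_all
  have d: "d \<in> tail_sgp t (2 * j + 4 + s) (Suc j)"
    using Suc unfolding d_def u_def .
  have "(x \<otimes> commutator x g) [^] ((2::nat) ^ s) = u \<otimes> d"
    unfolding d_def using u xc g by (simp add: m_assoc[symmetric])
  then have "inv (x [^] ((2::nat) ^ Suc s)) \<otimes> (x \<otimes> commutator x g) [^] ((2::nat) ^ Suc s)
      = d [^] (2::nat) \<otimes> (inv d \<otimes> commutator d u \<otimes> d)"
    using nat_pow_two_pow_Suc xc g inv_square_mult_square[OF u dc] by (simp add: u_def)
  moreover have "d [^] (2::nat) \<in> tail_sgp t (2 * j + 4 + Suc s) (Suc j)"
    using tail_closed_square[OF closed d] by simp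
  moreover have "commutator d u \<in> tail_sgp t (2 * j + 4 + Suc s) (Suc j)"
    using tail_closed_commutator[OF closed d u]
      tail_sgp_antimono[of "2 * j + 4 + Suc s" "2 * j + 4 + s + 2" "Suc j" "Suc (Suc j)" t]
    by auto
  ultimately show ?case
    using normal.inv_op_closed1[OF tail_sgp_normal] subgroup.m_closed[OF tail_sgp_subgroup] dc
    by simp
qed

lemma commutator_lcs_powers_in_tail_sgp:
  assumes closed: "\<And>m'. m < m' \<Longrightarrow> tail_closed t m'"
    and p: "p \<in> lcs_powers a m" and g: "g \<in> carrier G"
  shows "commutator p g \<in> tail_sgp t (a + 2) (Suc m)"
proof -
  obtain x j where x: "p = x [^] ((2::nat) ^ (a - 2 * (j + 1)))" "m \<le> j" "x \<in> lcs G j"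
    using p by (rule lcs_powersE)
  define e where "e = a - 2 * (j + 1)"
  have xc: "x \<in> carrier G" by (rule lcs_carrier[OF x(3)])
  have "commutator p g = inv (x [^] ((2::nat) ^ e)) \<otimes> (inv g \<otimes> x \<otimes> g) [^] ((2::nat) ^ e)"
    using commutator_eq_inv_mult_conj inv_conj_nat_pow[OF xc g] x(1) xc g by (simp add: e_def)
  also have "\<dots> = inv (x [^] ((2::nat) ^ e)) \<otimes> (x \<otimes> commutator x g) [^] ((2::nat) ^ e)"
    using inv_conj_eq_mult_commutator[OF xc g] by simp
  also have "\<dots> \<in> tail_sgp t (2 * j + 4 + e) (Suc j)"
    using inv_power_mult_power_in_tail_sgp[OF closed x(3) g] x(2) by simp
  also have "\<dots> \<subseteq> tail_sgp t (a + 2) (Suc m)"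
    by (rule tail_sgp_antimono) (use x(2) in \<open>auto simp: e_def\<close>)
  finally show ?thesis .
qed

lemma tail_closed_step:
  assumes closed: "\<And>m'. m < m' \<Longrightarrow> tail_closed t m'"
  shows "tail_closed t m"
proof -
  have comm: "commutator y g \<in> tail_sgp t (a + 2) (Suc m)"
    if y: "y \<in> tail_sgp t a m" and g: "g \<in> carrier G" for a y g
  proof (rule commutator_generate_closed[OF tail_sgp_normal tail_gens_carrier _ _ g])
    show "y \<in> generate G (lcs_powers a m \<union> weight_sgp t)"
      using y unfolding tail_sgp_def .
    fix h g' assume h: "h \<in> lcs_powers a m \<union> weight_sgp t" and g': "g' \<in> carrier G"
    show "commutator h g' \<in> tail_sgp t (a + 2) (Suc m)"
    proof (cases "h \<in> lcs_powers a m")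
      case True
      then show ?thesis using commutator_lcs_powers_in_tail_sgp[of m t] closed g' by blast
    next
      case False
      then have "commutator h g' \<in> weight_sgp t"
        using h g' normal_commutator_closed[OF weight_sgp_normal] by simp
      then show ?thesis using weight_sgp_tail_sgp by blast
    qed
  qed
  have square: "y [^] (2::nat) \<in> tail_sgp t (Suc a) m" if y: "y \<in> tail_sgp t a m" for a y
  proof (rule square_generate_closed[OF tail_sgp_normal tail_gens_carrier])
    show "y \<in> generate G (lcs_powers a m \<union> weight_sgp t)"
      using y unfolding tail_sgp_def .
    fix h assume h: "h \<in> lcs_powers a m \<union> weight_sgp t"
    show "h [^] (2::nat) \<in> tail_sgp t (Suc a) m"
    proof (cases "h \<in> lcs_powers a m")
      case True
      then show ?thesis
        by (rule square_lcs_powers_in_subgroup[OF tail_sgp_subgroup lcs_powers_tail_sgp])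
    next
      case False
      then have "h [^] (2::nat) \<in> weight_sgp t"
        using h subgroup_nat_pow_closed[OF weight_sgp_subgroup] by simp
      then show ?thesis using weight_sgp_tail_sgp by blast
    qed
  next
    fix y' g assume "y' \<in> generate G (lcs_powers a m \<union> weight_sgp t)" "g \<in> carrier G"
    then have "commutator y' g \<in> tail_sgp t (a + 2) (Suc m)"
      using comm unfolding tail_sgp_def by blast
    then show "commutator y' g \<in> tail_sgp t (Suc a) m"
      using tail_sgp_antimono[of "Suc a" "a + 2" m "Suc m" t] by auto
  qed
  show ?thesis unfolding tail_closed_def using comm square by blast
qed

lemma tail_closed: "tail_closed t m"
proof (induction "t - m" arbitrary: m rule: less_induct)
  case less
  show ?case
  proof (cases "t \<le> 2 * (m + 1)")
    case True
    then show ?thesis by (rule tail_closed_base)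
  next
    case False
    show ?thesis
    proof (rule tail_closed_step)
      fix m' assume "m < m'"
      with False show "tail_closed t m'" by (intro less) auto
    qed
  qed
qed

lemma commutator_weight_sgp:
  assumes "y \<in> weight_sgp a" "g \<in> carrier G"
  shows "commutator y g \<in> weight_sgp (a + 2)"
proof -
  have "y \<in> tail_sgp (a + 2) a 0"
    using assms(1) tail_sgp_eq_weight_sgp[of a "a + 2"] by simp
  then have "commutator y g \<in> tail_sgp (a + 2) (a + 2) (Suc 0)"
    using tail_closed_commutator[OF tail_closed] assms(2) by blast
  also have "\<dots> \<subseteq> tail_sgp (a + 2) (a + 2) 0"
    by (rule tail_sgp_antimono) simp_all
  finally show ?thesis using tail_sgp_eq_weight_sgp by simp
qed

lemma square_weight_sgp:
  assumes "y \<in> weight_sgp a"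
  shows "y [^] (2::nat) \<in> weight_sgp (Suc a)"
proof -
  have "y \<in> tail_sgp (Suc a) a 0"
    using assms tail_sgp_eq_weight_sgp[of a "Suc a"] by simp
  then have "y [^] (2::nat) \<in> tail_sgp (Suc a) (Suc a) 0"
    by (rule tail_closed_square[OF tail_closed])
  then show ?thesis using tail_sgp_eq_weight_sgp by simp
qed

lemma lcs_subset_weight_sgp: "a \<le> 2 * (j + 1) \<Longrightarrow> lcs G j \<subseteq> weight_sgp a"
  using lcs_power_in_weight_sgp[of _ j a] lcs_carrier by auto

lemma two_pow_double_diff: "(2::nat) ^ (2 * n - 2 * i) = 4 ^ (n - i)"
  unfolding diff_mult_distrib2[symmetric] power_mult by simp

lemma N_sgp_eq_weight_sgp:
  assumes n: "1 \<le> n"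
  shows "N_sgp G n 1 = weight_sgp (2 * n)"
proof
  let ?U = "\<Union>i\<in>{1..n}. pow_sgp G (gamma G i) (4 ^ (n - i))"
  have pow_gamma_carrier: "pow_sgp G (gamma G i) k \<subseteq> carrier G" for i k
    unfolding pow_sgp_def gamma_def by (rule generate_incl) (use lcs_carrier in auto)
  show "N_sgp G n 1 \<subseteq> weight_sgp (2 * n)"
    unfolding N_sgp_def
  proof (rule generate_subgroup_incl[OF UN_least weight_sgp_subgroup])
    fix i assume i: "i \<in> {1..n}"
    show "pow_sgp G (gamma G i) (4 ^ (n - i)) \<subseteq> weight_sgp (2 * n)"
      unfolding pow_sgp_def
    proof (rule generate_subgroup_incl[OF _ weight_sgp_subgroup], clarify)
      fix h assume "h \<in> gamma G i"
      then have "h [^] ((2::nat) ^ (2 * n - 2 * (i - 1 + 1))) \<in> weight_sgp (2 * n)"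
        unfolding gamma_def by (rule lcs_power_in_weight_sgp)
      moreover have "i - 1 + 1 = i" using i by simp
      ultimately show "h [^] ((4::nat) ^ (n - i)) \<in> weight_sgp (2 * n)"
        unfolding two_pow_double_diff by simp
    qed
  qed
  have N_subgroup: "subgroup (N_sgp G n 1) G"
    unfolding N_sgp_def by (rule generate_is_subgroup) (use pow_gamma_carrier in blast)
  have pow_gamma_N: "x [^] ((4::nat) ^ (n - i)) \<in> N_sgp G n 1"
    if "i \<in> {1..n}" "x \<in> lcs G (i - 1)" for i x
    using that unfolding N_sgp_def pow_sgp_def gamma_def by (blast intro: generate.incl)
  show "weight_sgp (2 * n) \<subseteq> N_sgp G n 1"
  proof (rule weight_sgp_minimal[OF N_subgroup])
    fix x j assume x: "x \<in> lcs G j"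
    show "x [^] ((2::nat) ^ (2 * n - 2 * (j + 1))) \<in> N_sgp G n 1"
    proof (cases "j + 1 \<le> n")
      case True
      then show ?thesis using pow_gamma_N[of "j + 1" x] x unfolding two_pow_double_diff by simp
    next
      case False
      then have "n - 1 \<le> j" by simp
      then have "x \<in> lcs G (n - 1)" using lcs_antimono x by blast
      then show ?thesis using pow_gamma_N[of n x] n False lcs_carrier by simp
    qed
  qed
qed

lemma lbs_eq_weight_sgp: "lbs G j = weight_sgp (2 * j + 2)"
proof (induction j)
  case 0
  have "carrier G \<subseteq> weight_sgp 2"
    using lcs_subset_weight_sgp[of 2 0] by simp
  then have "carrier G = weight_sgp 2"
    using subgroup.subset[OF weight_sgp_subgroup] by (rule subset_antisym)
  then show ?case by (simp only: lbs.simps mult_0_right add_0)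
next
  case (Suc j)
  let ?L = "weight_sgp (2 * j + 2)"
  let ?A = "pow_sgp G ?L 4" and ?B = "comm_sgp G ?L (carrier G)"
  have L: "?L \<subseteq> carrier G" by (rule subgroup.subset[OF weight_sgp_subgroup])
  have AB: "?A \<union> ?B \<subseteq> carrier G"
    unfolding pow_sgp_def comm_sgp_def using L by (intro Un_least generate_incl) auto
  have lbs_Suc: "lbs G (Suc j) = generate G (?A \<union> ?B)"
    using Suc by (simp add: prod_sgp_def)
  have "?A \<subseteq> weight_sgp (2 * Suc j + 2)"
    unfolding pow_sgp_def
  proof (rule generate_subgroup_incl[OF _ weight_sgp_subgroup], clarify)
    fix h assume h: "h \<in> ?L"
    have "(h [^] (2::nat)) [^] (2::nat) \<in> weight_sgp (Suc (Suc (2 * j + 2)))"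
      by (intro square_weight_sgp h)
    moreover have "(h [^] (2::nat)) [^] (2::nat) = h [^] (4::nat)"
      using h L by (auto simp: nat_pow_pow)
    ultimately show "h [^] (4::nat) \<in> weight_sgp (2 * Suc j + 2)" by simp
  qed
  moreover have "?B \<subseteq> weight_sgp (2 * Suc j + 2)"
    unfolding comm_sgp_def
  proof (rule generate_subgroup_incl[OF _ weight_sgp_subgroup], clarify)
    fix h k assume "h \<in> ?L" "k \<in> carrier G"
    then have "commutator h k \<in> weight_sgp (2 * j + 2 + 2)" by (rule commutator_weight_sgp)
    then show "inv h \<otimes> inv k \<otimes> h \<otimes> k \<in> weight_sgp (2 * Suc j + 2)"
      unfolding commutator_def by simp
  qed
  moreover have "weight_sgp (2 * Suc j + 2) \<subseteq> generate G (?A \<union> ?B)"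
  proof (rule weight_sgp_minimal[OF generate_is_subgroup[OF AB]])
    fix x k assume x: "x \<in> lcs G k"
    show "x [^] ((2::nat) ^ (2 * Suc j + 2 - 2 * (k + 1))) \<in> generate G (?A \<union> ?B)"
    proof (cases "k \<le> j")
      case True
      let ?e = "2 * j + 2 - 2 * (k + 1)"
      have "2 * Suc j + 2 - 2 * (k + 1) = ?e + 2" using True by simp
      then have "x [^] ((2::nat) ^ (2 * Suc j + 2 - 2 * (k + 1))) = (x [^] ((2::nat) ^ ?e)) [^] (4::nat)"
        using lcs_carrier[OF x] by (simp add: nat_pow_pow power_add mult.commute)
      moreover have "(x [^] ((2::nat) ^ ?e)) [^] (4::nat) \<in> ?A"
        unfolding pow_sgp_def using lcs_power_in_weight_sgp[OF x] by (blast intro: generate.incl)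
      ultimately show ?thesis by (auto intro: generate.incl)
    next
      case False
      have "lcs G j \<subseteq> ?L" by (rule lcs_subset_weight_sgp) simp
      then have "lcs G (Suc j) \<subseteq> ?B"
        unfolding lcs.simps comm_sgp_def by (intro mono_generate) blast
      then have "x \<in> ?B" using lcs_antimono[of "Suc j" k] x False by auto
      then show ?thesis using False lcs_carrier[OF x] by (auto intro: generate.incl)
    qed
  qed
  ultimately show ?case
    unfolding lbs_Suc using generate_subgroup_incl[OF _ weight_sgp_subgroup] by blast
qed

end

theorem mainTheorem8:
  fixes G :: "('a, 'b) monoid_scheme" and n :: nat
  assumes "group G" and "n \<ge> 1"
  shows "lambda_bar G n = N_sgp G n 1"
proof -
  interpret group G by fact
  have "lambda_bar G n = weight_sgp (2 * (n - 1) + 2)"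
    unfolding lambda_bar_def by (rule lbs_eq_weight_sgp)
  also have "2 * (n - 1) + 2 = 2 * n"
    using assms(2) by simp
  also have "weight_sgp (2 * n) = N_sgp G n 1"
    using N_sgp_eq_weight_sgp[OF assms(2)] by simp
  finally show ?thesis .
qed

end
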